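(* Let $\ell\in\{1,\dots,L\}$, assume the asymptotic quadratic-Lipschitz condition on $\mathcal G^{(\ell)}$, and let $A$ be a constant with $\|\mathcal G^{(\ell)}(z)\|_F\le A(1+\|z\|_2^2)$ for all $z$ (such $A$ exists under the condition). Let $Q_1\in\mathcal S^+_{D_\ell}$. Then: (a) $\{Q_0:\|Q_0\|_F<\frac{1}{2A\|Q_1\|_2}\}\subseteq\mathcal D_{\ell,Q_1}$; in particular $\mathbf 0$ lies in the interior of $\mathcal D_{\ell,Q_1}$. (b) For every $Q_0$ in the interior of $\mathcal D_{\ell,Q_1}$ and every sequence $Q_{1,n}\in\mathcal S^+_{D_\ell}$ with $Q_{1,n}\to Q_1$, one has $M_\ell(Q_0\mid Q_{1,n})\to M_\ell(Q_0\mid Q_1)$. (c) For every $Q_0\in\mathcal D_{\ell,Q_1}$ there are $Q_{0,n}$ in the interior of $\mathcal D_{\ell,Q_1}$ with $\lim_{n\to\infty}\log M_\ell(Q_{0,n}\mid Q_1)\le\log M_\ell(Q_0\mid Q_1)$.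
   Context: $\mathcal S^+_D$ denotes the symmetric positive semidefinite $D\times D$ real matrices, $\sqrt Q$ the positive semidefinite square root, $\|\cdot\|_2$ the Euclidean norm (and induced operator norm for matrices), $\|\cdot\|_F$ the Frobenius norm. $\mathcal G^{(\ell)}:\mathbb R^{D_\ell}\to\mathcal S^+_{D_{\ell+1}}$ is a map. Asymptotic quadratic-Lipschitz condition: $\mathcal G^{(\ell)}$ is continuous and for every $\varepsilon>0$ there is $C_\varepsilon>0$ such that for all $z,z'\in\mathbb R^{D_\ell}$, $\|\mathcal G^{(\ell)}(z)-\mathcal G^{(\ell)}(z')\|_F\le C_\varepsilon[1+\|z-z'\|_2(\|z\|_2+\|z'\|_2)]+\varepsilon(\|z\|_2^2+\|z'\|_2^2)$. For $Q_1\in\mathcal S^+_{D_\ell}$ and $Q_0\in\mathbb R^{D_{\ell+1}\times D_{\ell+1}}$ define $M_\ell(Q_0\mid Q_1)=\mathbf E[\exp(\operatorname{tr}(Q_0^\top\mathcal G^{(\ell)}(\sqrt{Q_1}Z)))]\in(0,\infty]$ with $Z\sim\mathcal N(\mathbf 0,\mathbf I_{D_\ell})$, and $\mathcal D_{\ell,Q_1}=\{Q_0\in\mathbb R^{D_{\ell+1}\times D_{\ell+1}}:M_\ell(Q_0\mid Q_1)<\infty\}$. *)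

theory Defs
  imports "HOL-Analysis.Analysis"
begin

definition psd :: "real^'n^'n \<Rightarrow> bool" where
  "psd Q \<longleftrightarrow> transpose Q = Q \<and> (\<forall>x. 0 \<le> x \<bullet> (Q *v x))"

definition psd_sqrt :: "real^'n^'n \<Rightarrow> real^'n^'n" where
  "psd_sqrt Q = (THE S. psd S \<and> S ** S = Q)"

text \<open>Induced operator 2-norm of a matrix. (The library norm on real^'n^'m
  is the Frobenius norm.)\<close>
definition op_norm :: "real^'n^'m \<Rightarrow> real" where
  "op_norm Q = onorm (\<lambda>x. Q *v x)"

definition std_gauss :: "(real^'n) measure" where
  "std_gauss = density lborel
     (\<lambda>z. ennreal ((2 * pi) powr (- real CARD('n) / 2) * exp (- (norm z)\<^sup>2 / 2)))"

definition asym_quad_lipschitz :: "(real^'n \<Rightarrow> real^'m^'m) \<Rightarrow> bool" where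
  "asym_quad_lipschitz G \<longleftrightarrow> continuous_on UNIV G \<and>
     (\<forall>\<epsilon>>0. \<exists>C>0. \<forall>z z'. norm (G z - G z') \<le>
        C * (1 + norm (z - z') * (norm z + norm z')) + \<epsilon> * ((norm z)\<^sup>2 + (norm z')\<^sup>2))"

definition mgfM :: "(real^'n \<Rightarrow> real^'m^'m) \<Rightarrow> real^'m^'m \<Rightarrow> real^'n^'n \<Rightarrow> ennreal" where
  "mgfM G Q0 Q1 = (\<integral>\<^sup>+ z. ennreal (exp (trace (transpose Q0 ** G (psd_sqrt Q1 *v z)))) \<partial>std_gauss)"

definition domD :: "(real^'n \<Rightarrow> real^'m^'m) \<Rightarrow> real^'n^'n \<Rightarrow> (real^'m^'m) set" where
  "domD G Q1 = {Q0. mgfM G Q0 Q1 < \<infinity>}"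

end

theory Submission
  imports Defs "HOL-Probability.Distributions"
begin

text \<open>Near a positive semidefinite $Q$, every square root $\sqrt{Q'}$ is given by the binomial
  series $\sqrt{c} \sum_k \binom{1/2}{k} (-1)^k (I - Q'/c)^k$, which converges uniformly on
  contractions; hence $Q \mapsto \sqrt{Q}$ is continuous.
  (a) The growth bound gives $\mathrm{tr}(Q_0^\top \mathcal G(\sqrt{Q_1} z)) \le \|Q_0\|_F A
  (1 + \|Q_1\|_2 \|z\|^2)$, which is integrable against the Gaussian when
  $2 A \|Q_1\|_2 \|Q_0\|_F < 1$.
  (b) For $Q_0$ in the interior, $(1 + \eta) Q_0$ still lies in the domain; the
  quadratic-Lipschitz condition and Young's inequality dominate the integrands for nearby
  covariances by an integrable function, and dominated convergence applies.
  (c) The domain is convex with $0$ in its interior, so $t Q_0$ lies in the interior for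
  $t < 1$, and dominated convergence gives $M(t Q_0 \mid Q_1) \to M(Q_0 \mid Q_1)$ as
  $t \to 1$.\<close>

section \<open>The binomial series of $\sqrt{1 - x}$\<close>

definition sqrt_one_minus_coeff :: "nat \<Rightarrow> real" where
  "sqrt_one_minus_coeff k = ((1/2) gchoose k) * (-1) ^ k"

lemma sqrt_one_minus_coeff_0 [simp]: "sqrt_one_minus_coeff 0 = 1"
  by (simp add: sqrt_one_minus_coeff_def)

lemma sqrt_one_minus_coeff_Suc:
  "sqrt_one_minus_coeff (Suc k) = sqrt_one_minus_coeff k * (real k - 1/2) / (real k + 1)"
  by (simp add: sqrt_one_minus_coeff_def gbinomial_prod_rev field_simps)

lemma sum_abs_sqrt_one_minus_coeff:
  "(\<Sum>k\<in>{1..N}. \<bar>sqrt_one_minus_coeff k\<bar>) = 1 - 2 * (real N + 1) * \<bar>sqrt_one_minus_coeff (Suc N)\<bar>"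
proof (induction N)
  case 0
  then show ?case by (simp add: sqrt_one_minus_coeff_def)
next
  case (Suc N)
  have "\<bar>sqrt_one_minus_coeff (Suc (Suc N))\<bar>
      = \<bar>sqrt_one_minus_coeff (Suc N)\<bar> * (real N + 1/2) / (real N + 2)"
    by (subst sqrt_one_minus_coeff_Suc) (simp add: abs_mult abs_divide add.commute)
  with Suc show ?case by (simp add: field_simps)
qed

lemma summable_abs_sqrt_one_minus_coeff_Suc:
  "summable (\<lambda>k. \<bar>sqrt_one_minus_coeff (Suc k)\<bar>)"
  and suminf_abs_sqrt_one_minus_coeff_Suc_le:
  "(\<Sum>k. \<bar>sqrt_one_minus_coeff (Suc k)\<bar>) \<le> 1"
proof -
  have partial: "(\<Sum>k<N. \<bar>sqrt_one_minus_coeff (Suc k)\<bar>) \<le> 1" for N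
  proof -
    have "(\<Sum>k<N. \<bar>sqrt_one_minus_coeff (Suc k)\<bar>) = (\<Sum>k\<in>{1..N}. \<bar>sqrt_one_minus_coeff k\<bar>)"
      by (rule sum.reindex_bij_witness[where i="\<lambda>k. k - 1" and j=Suc]) auto
    also have "\<dots> = 1 - 2 * (real N + 1) * \<bar>sqrt_one_minus_coeff (Suc N)\<bar>"
      by (rule sum_abs_sqrt_one_minus_coeff)
    finally show ?thesis by simp
  qed
  show "summable (\<lambda>k. \<bar>sqrt_one_minus_coeff (Suc k)\<bar>)"
    using partial by (intro summableI_nonneg_bounded) auto
  then show "(\<Sum>k. \<bar>sqrt_one_minus_coeff (Suc k)\<bar>) \<le> 1"
    using partial by (intro suminf_le_const) auto
qed

lemma summable_abs_sqrt_one_minus_coeff: "summable (\<lambda>k. \<bar>sqrt_one_minus_coeff k\<bar>)"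
  using summable_abs_sqrt_one_minus_coeff_Suc by (subst summable_Suc_iff[symmetric])

text \<open>The Cauchy square of the series is $1 - x$, by Vandermonde's identity for
  $\binom{1/2}{i}\binom{1/2}{k-i}$.\<close>
lemma sqrt_one_minus_coeff_convolution:
  "(\<Sum>i\<le>k. sqrt_one_minus_coeff i * sqrt_one_minus_coeff (k - i))
     = (if k = 0 then 1 else if k = 1 then -1 else 0)"
proof -
  have "(\<Sum>i\<le>k. sqrt_one_minus_coeff i * sqrt_one_minus_coeff (k - i))
      = (\<Sum>i\<in>{0..k}. ((1/2::real) gchoose i) * ((1/2) gchoose (k - i))) * (-1) ^ k"
    unfolding sqrt_one_minus_coeff_def sum_distrib_right
    by (intro sum.cong) (auto simp: atLeast0AtMost power_add[symmetric])
  also have "\<dots> = ((1::real) gchoose k) * (-1) ^ k"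
    using gbinomial_Vandermonde[of "1/2::real" "1/2" k] by simp
  also have "\<dots> = (if k = 0 then 1 else if k = 1 then -1 else 0)"
    using binomial_gbinomial[of 1 k, where 'a=real] by (auto simp: binomial_eq_0)
  finally show ?thesis .
qed

section \<open>Cauchy products for bounded bilinear maps\<close>

lemma bounded_bilinear_euclidean_expansion:
  fixes u :: "'a::euclidean_space" and v :: "'b::euclidean_space"
  assumes "bounded_bilinear f"
  shows "f u v = (\<Sum>p\<in>Basis. \<Sum>q\<in>Basis. ((u \<bullet> p) * (v \<bullet> q)) *\<^sub>R f p q)"
proof -
  interpret bounded_bilinear f by fact
  have "f u v = (\<Sum>p\<in>Basis. (u \<bullet> p) *\<^sub>R f p v)"
    by (subst (1) euclidean_representation[of u, symmetric]) (simp add: sum_left scaleR_left)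
  also have "\<dots> = (\<Sum>p\<in>Basis. (u \<bullet> p) *\<^sub>R (\<Sum>q\<in>Basis. (v \<bullet> q) *\<^sub>R f p q))"
    by (subst (1) euclidean_representation[of v, symmetric]) (simp add: sum_right scaleR_right)
  also have "\<dots> = (\<Sum>p\<in>Basis. \<Sum>q\<in>Basis. ((u \<bullet> p) * (v \<bullet> q)) *\<^sub>R f p q)"
    by (simp add: scaleR_sum_right)
  finally show ?thesis .
qed

text \<open>Expanding in a basis reduces this to the scalar Cauchy product.\<close>
lemma bounded_bilinear_Cauchy_product_sums:
  fixes a :: "nat \<Rightarrow> 'a::euclidean_space" and b :: "nat \<Rightarrow> 'b::euclidean_space"
  assumes f: "bounded_bilinear f"
    and a: "summable (\<lambda>k. norm (a k))" and b: "summable (\<lambda>k. norm (b k))"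
  shows "(\<lambda>k. \<Sum>i\<le>k. f (a i) (b (k - i))) sums f (\<Sum>k. a k) (\<Sum>k. b k)"
proof -
  have coord_summable: "summable (\<lambda>k. norm (c k \<bullet> p))"
    if "summable (\<lambda>k. norm (c k))" "p \<in> Basis" for c :: "nat \<Rightarrow> 'd::euclidean_space" and p
    using that by (intro summable_comparison_test[OF _ that(1)]) (auto intro: Basis_le_norm)
  have suminf_coord: "(\<Sum>k. c k) \<bullet> p = (\<Sum>k. c k \<bullet> p)"
    if "summable (\<lambda>k. norm (c k))" for c :: "nat \<Rightarrow> 'd::euclidean_space" and p
    using bounded_linear.suminf[OF bounded_linear_inner_left summable_norm_cancel[OF that]] .
  have "(\<lambda>k. \<Sum>p\<in>Basis. \<Sum>q\<in>Basis.
          (\<Sum>i\<le>k. (a i \<bullet> p) * (b (k - i) \<bullet> q)) *\<^sub>R f p q)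
        sums (\<Sum>p\<in>Basis. \<Sum>q\<in>Basis. ((\<Sum>k. a k \<bullet> p) * (\<Sum>k. b k \<bullet> q)) *\<^sub>R f p q)"
    by (intro sums_sum sums_scaleR_left Cauchy_product_sums coord_summable a b)
  moreover have "(\<Sum>i\<le>k. f (a i) (b (k - i)))
      = (\<Sum>p\<in>Basis. \<Sum>q\<in>Basis. (\<Sum>i\<le>k. (a i \<bullet> p) * (b (k - i) \<bullet> q)) *\<^sub>R f p q)" for k
  proof -
    have "(\<Sum>i\<le>k. f (a i) (b (k - i)))
        = (\<Sum>i\<le>k. \<Sum>p\<in>Basis. \<Sum>q\<in>Basis. ((a i \<bullet> p) * (b (k - i) \<bullet> q)) *\<^sub>R f p q)"
      by (intro sum.cong refl bounded_bilinear_euclidean_expansion[OF f])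
    also have "\<dots> = (\<Sum>p\<in>Basis. \<Sum>i\<le>k. \<Sum>q\<in>Basis. ((a i \<bullet> p) * (b (k - i) \<bullet> q)) *\<^sub>R f p q)"
      by (rule sum.swap)
    also have "\<dots> = (\<Sum>p\<in>Basis. \<Sum>q\<in>Basis. \<Sum>i\<le>k. ((a i \<bullet> p) * (b (k - i) \<bullet> q)) *\<^sub>R f p q)"
      by (intro sum.cong refl) (rule sum.swap)
    finally show ?thesis by (simp add: scaleR_sum_left)
  qed
  moreover have "f (\<Sum>k. a k) (\<Sum>k. b k)
      = (\<Sum>p\<in>Basis. \<Sum>q\<in>Basis. ((\<Sum>k. a k \<bullet> p) * (\<Sum>k. b k \<bullet> q)) *\<^sub>R f p q)"
    by (subst bounded_bilinear_euclidean_expansion[OF f]) (simp add: suminf_coord a b)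
  ultimately show ?thesis by simp
qed

section \<open>Frobenius and operator norms of matrices\<close>

lemma norm_matrix_sq: "(norm (A::real^'a^'b))\<^sup>2 = (\<Sum>i\<in>UNIV. (norm (A $ i))\<^sup>2)"
  by (simp add: power2_norm_eq_inner inner_vec_def)

lemma norm_vec_sq: "(norm (x::real^'a))\<^sup>2 = (\<Sum>i\<in>UNIV. (x $ i)\<^sup>2)"
  unfolding power2_norm_eq_inner inner_vec_def by (simp add: power2_eq_square)

lemma norm_matrix_vector_mult_le: "norm ((A::real^'a^'b) *v x) \<le> norm A * norm x"
proof (rule power2_le_imp_le)
  have "(norm (A *v x))\<^sup>2 = (\<Sum>i\<in>UNIV. ((A $ i) \<bullet> x)\<^sup>2)"
    by (simp add: norm_vec_sq matrix_vector_mul_component)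
  also have "\<dots> \<le> (\<Sum>i\<in>UNIV. (norm (A $ i))\<^sup>2 * (norm x)\<^sup>2)"
  proof (intro sum_mono)
    fix i
    have "\<bar>(A $ i) \<bullet> x\<bar>\<^sup>2 \<le> (norm (A $ i) * norm x)\<^sup>2"
      by (intro power_mono Cauchy_Schwarz_ineq2) auto
    then show "((A $ i) \<bullet> x)\<^sup>2 \<le> (norm (A $ i))\<^sup>2 * (norm x)\<^sup>2"
      by (simp add: power_mult_distrib)
  qed
  also have "\<dots> = (norm A * norm x)\<^sup>2"
    by (simp add: norm_matrix_sq sum_distrib_right power_mult_distrib)
  finally show "(norm (A *v x))\<^sup>2 \<le> (norm A * norm x)\<^sup>2" .
qed simp

lemma norm_transpose: "norm (transpose (A::real^'a^'b)) = norm A"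
proof -
  have "(norm (transpose A))\<^sup>2 = (norm A)\<^sup>2"
    unfolding norm_matrix_sq norm_vec_sq transpose_def by (simp, rule sum.swap)
  then show ?thesis by (simp add: power2_eq_iff_nonneg)
qed

lemma norm_matrix_mult_le: "norm ((A::real^'k^'m) ** (B::real^'n^'k)) \<le> norm A * norm B"
proof (rule power2_le_imp_le)
  have row: "(A ** B) $ i = transpose B *v (A $ i)" for i
    by (simp add: matrix_matrix_mult_def vector_matrix_mult_def vec_eq_iff mult.commute)
  have "(norm (A ** B))\<^sup>2 = (\<Sum>i\<in>UNIV. (norm (transpose B *v (A $ i)))\<^sup>2)"
    by (simp add: norm_matrix_sq row)
  also have "\<dots> \<le> (\<Sum>i\<in>UNIV. (norm B)\<^sup>2 * (norm (A $ i))\<^sup>2)"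
  proof (intro sum_mono)
    fix i
    have "norm (transpose B *v (A $ i)) \<le> norm B * norm (A $ i)"
      using norm_matrix_vector_mult_le[of "transpose B"] by (simp add: norm_transpose)
    then show "(norm (transpose B *v (A $ i)))\<^sup>2 \<le> (norm B)\<^sup>2 * (norm (A $ i))\<^sup>2"
      by (simp add: power_mono flip: power_mult_distrib)
  qed
  also have "\<dots> = (norm A * norm B)\<^sup>2"
    by (simp add: norm_matrix_sq sum_distrib_left power_mult_distrib mult.commute)
  finally show "(norm (A ** B))\<^sup>2 \<le> (norm A * norm B)\<^sup>2" .
qed simp

lemma bounded_bilinear_matrix_mult:
  "bounded_bilinear (\<lambda>(A::real^'k^'m) (B::real^'n^'k). A ** B)"
proof (rule bounded_bilinear.intro)
  show "\<exists>K. \<forall>A B. norm (A ** B) \<le> norm (A::real^'k^'m) * norm (B::real^'n^'k) * K"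
    by (rule exI[of _ 1]) (simp add: norm_matrix_mult_le)
qed (simp_all add: matrix_matrix_mult_def vec_eq_iff sum.distrib distrib_left distrib_right
    sum_distrib_left mult_ac)

lemma bounded_bilinear_matrix_vector_mult:
  "bounded_bilinear (\<lambda>(A::real^'k^'m) (x::real^'k). A *v x)"
proof (rule bounded_bilinear.intro)
  show "\<exists>K. \<forall>A x. norm (A *v x) \<le> norm (A::real^'k^'m) * norm (x::real^'k) * K"
    by (rule exI[of _ 1]) (simp add: norm_matrix_vector_mult_le)
qed (simp_all add: matrix_vector_mult_add_rdistrib matrix_vector_right_distrib
    matrix_vector_mult_scaleR scaleR_matrix_vector_assoc)

lemmas matrix_mult_diff_left = bounded_bilinear.diff_left[OF bounded_bilinear_matrix_mult]
lemmas matrix_mult_diff_right = bounded_bilinear.diff_right[OF bounded_bilinear_matrix_mult]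
lemmas matrix_mult_add_left = bounded_bilinear.add_left[OF bounded_bilinear_matrix_mult]
lemmas matrix_scaleR_vector_mult = bounded_bilinear.scaleR_left[OF bounded_bilinear_matrix_vector_mult]

lemma bounded_linear_transpose: "bounded_linear (transpose :: real^'a^'b \<Rightarrow> real^'b^'a)"
proof (rule bounded_linear_intro[where K=1])
  show "norm (transpose A) \<le> norm A * 1" for A :: "real^'a^'b"
    by (simp add: norm_transpose)
qed (simp_all add: transpose_def vec_eq_iff)

lemmas transpose_diff = linear_diff[OF bounded_linear.linear[OF bounded_linear_transpose]]

lemma norm_matrix_vector_mult_le_op_norm: "norm ((A::real^'a^'b) *v x) \<le> op_norm A * norm x"
  unfolding op_norm_def by (rule onorm[OF matrix_vector_mul_bounded_linear])

lemma op_norm_nonneg: "0 \<le> op_norm (A::real^'a^'b)"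
  unfolding op_norm_def by (rule onorm_pos_le[OF matrix_vector_mul_bounded_linear])

lemma op_norm_le_add_norm_diff: "op_norm (A::real^'a^'b) \<le> op_norm B + norm (A - B)"
  unfolding op_norm_def
proof (rule onorm_le)
  fix x
  have "norm (A *v x) \<le> norm (B *v x) + norm ((A - B) *v x)"
    using norm_triangle_ineq[of "B *v x" "(A - B) *v x"]
    by (simp add: matrix_vector_mult_diff_rdistrib)
  also have "\<dots> \<le> onorm ((*v) B) * norm x + norm (A - B) * norm x"
    by (intro add_mono norm_matrix_vector_mult_le onorm[OF matrix_vector_mul_bounded_linear])
  finally show "norm (A *v x) \<le> (onorm ((*v) B) + norm (A - B)) * norm x"
    by (simp add: distrib_right)
qed

lemma trace_transpose_mult: "trace (transpose (A::real^'m^'m) ** B) = A \<bullet> B"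
  unfolding trace_def matrix_matrix_mult_def transpose_def inner_vec_def
  by (simp, rule sum.swap)

lemma symmetric_matrix_inner_commute:
  "transpose A = A \<Longrightarrow> x \<bullet> ((A::real^'a^'a) *v y) = (A *v x) \<bullet> y"
  by (metis dot_lmul_matrix transpose_matrix_vector)

section \<open>A power series for the square root of $I - X$\<close>

primrec matpow :: "real^'n^'n \<Rightarrow> nat \<Rightarrow> real^'n^'n" where
  "matpow X 0 = mat 1"
| "matpow X (Suc k) = X ** matpow X k"

lemma matpow_add: "matpow X (i + j) = matpow X i ** matpow X j"
  by (induction i) (simp_all add: matrix_mul_assoc)

lemma matpow_commute: "A ** X = X ** A \<Longrightarrow> A ** matpow X k = matpow X k ** A"
proof (induction k)
  case (Suc k)
  have "A ** (X ** matpow X k) = (X ** A) ** matpow X k"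
    by (simp add: matrix_mul_assoc Suc.prems)
  also have "\<dots> = X ** (matpow X k ** A)"
    by (simp add: matrix_mul_assoc Suc.IH[OF Suc.prems, symmetric])
  also have "\<dots> = (X ** matpow X k) ** A"
    by (rule matrix_mul_assoc)
  finally show ?case by simp
qed simp

lemma transpose_matpow: "transpose X = X \<Longrightarrow> transpose (matpow X k) = matpow X k"
proof (induction k)
  case (Suc k)
  then show ?case
    using matpow_commute[of X X k] by (simp add: matrix_transpose_mul)
qed simp

lemma continuous_on_matpow: "continuous_on S (\<lambda>X. matpow X k)"
  by (induction k) (simp_all add: bounded_bilinear.continuous_on[OF bounded_bilinear_matrix_mult]
      continuous_on_id)

definition contraction_matrix :: "real^'n^'n \<Rightarrow> bool" where
  "contraction_matrix X \<longleftrightarrow> (\<forall>x. norm (X *v x) \<le> norm x)"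

lemma norm_matpow_vector_le: "contraction_matrix X \<Longrightarrow> norm (matpow X k *v x) \<le> norm x"
proof (induction k arbitrary: x)
  case (Suc k)
  then have "norm (X *v (matpow X k *v x)) \<le> norm x"
    unfolding contraction_matrix_def by (meson order_trans)
  then show ?case by (simp add: matrix_vector_mul_assoc)
qed simp

lemma norm_le_sqrt_card_if_contraction:
  fixes X :: "real^'n^'n"
  assumes "contraction_matrix X"
  shows "norm X \<le> sqrt (real CARD('n))"
proof (rule real_le_rsqrt)
  have column: "transpose X $ j = X *v axis j 1" for j
    by (simp add: transpose_def matrix_vector_mult_def axis_def vec_eq_iff if_distrib cong: if_cong)
  have "(norm X)\<^sup>2 = (\<Sum>j\<in>UNIV. (norm (X *v axis j 1))\<^sup>2)"
    by (subst norm_transpose[symmetric]) (simp add: norm_matrix_sq column)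
  also have "\<dots> \<le> (\<Sum>j\<in>(UNIV::'n set). 1)"
    using assms[unfolded contraction_matrix_def, rule_format, of "axis _ 1"]
    by (intro sum_mono power_le_one) auto
  finally show "(norm X)\<^sup>2 \<le> real CARD('n)" by simp
qed

lemma norm_matpow_le:
  fixes X :: "real^'n^'n"
  assumes "contraction_matrix X"
  shows "norm (matpow X k) \<le> sqrt (real CARD('n))"
  using assms norm_matpow_vector_le
  by (intro norm_le_sqrt_card_if_contraction) (auto simp: contraction_matrix_def)

definition sqrt_series :: "real^'n^'n \<Rightarrow> real^'n^'n" where
  "sqrt_series X = (\<Sum>k. sqrt_one_minus_coeff k *\<^sub>R matpow X k)"

lemma summable_norm_sqrt_series:
  fixes X :: "real^'n^'n"
  shows "contraction_matrix X \<Longrightarrow> summable (\<lambda>k. norm (sqrt_one_minus_coeff k *\<^sub>R matpow X k))"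
  by (rule summable_comparison_test[OF _ summable_mult2[OF summable_abs_sqrt_one_minus_coeff,
        of "sqrt (real CARD('n))"]])
    (auto intro!: mult_left_mono norm_matpow_le)

lemma summable_sqrt_series:
  "contraction_matrix X \<Longrightarrow> summable (\<lambda>k. sqrt_one_minus_coeff k *\<^sub>R matpow X k)"
  by (rule summable_norm_cancel[OF summable_norm_sqrt_series])

lemma sqrt_series_square:
  fixes X :: "real^'n^'n"
  assumes X: "contraction_matrix X"
  shows "sqrt_series X ** sqrt_series X = mat 1 - X"
proof -
  let ?c = sqrt_one_minus_coeff
  define d where "d (k::nat) = (if k = 0 then mat 1 else if k = 1 then - X else (0::real^'n^'n))" for k
  have "(\<lambda>k. \<Sum>i\<le>k. (?c i *\<^sub>R matpow X i) ** (?c (k - i) *\<^sub>R matpow X (k - i)))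
          sums (sqrt_series X ** sqrt_series X)"
    unfolding sqrt_series_def
    by (rule bounded_bilinear_Cauchy_product_sums[OF bounded_bilinear_matrix_mult
          summable_norm_sqrt_series[OF X] summable_norm_sqrt_series[OF X]])
  moreover have "(\<Sum>i\<le>k. (?c i *\<^sub>R matpow X i) ** (?c (k - i) *\<^sub>R matpow X (k - i))) = d k" for k
  proof -
    have "(\<Sum>i\<le>k. (?c i *\<^sub>R matpow X i) ** (?c (k - i) *\<^sub>R matpow X (k - i)))
        = (\<Sum>i\<le>k. ?c i * ?c (k - i)) *\<^sub>R matpow X k"
      by (auto simp: scaleR_sum_left matrix_scalar_ac scalar_matrix_assoc[symmetric]
          matpow_add[symmetric] intro!: sum.cong)
    then show ?thesis
      by (simp add: sqrt_one_minus_coeff_convolution d_def)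
  qed
  moreover have "d sums (sum d {0, 1})"
    by (rule sums_finite) (auto simp: d_def)
  then have "d sums (mat 1 - X)"
    by (simp add: d_def)
  ultimately show ?thesis
    by (simp add: sums_unique2)
qed

lemma transpose_sqrt_series:
  assumes X: "contraction_matrix X" and sym: "transpose X = X"
  shows "transpose (sqrt_series X) = sqrt_series X"
  unfolding sqrt_series_def
  by (simp add: bounded_linear.suminf[OF bounded_linear_transpose summable_sqrt_series[OF X]]
      transpose_scalar transpose_matpow[OF sym])

lemma sqrt_series_commute:
  assumes X: "contraction_matrix X" and comm: "A ** X = X ** A"
  shows "A ** sqrt_series X = sqrt_series X ** A"
proof -
  note bl = bounded_bilinear.bounded_linear_right[OF bounded_bilinear_matrix_mult]
    bounded_bilinear.bounded_linear_left[OF bounded_bilinear_matrix_mult]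
  show ?thesis
    unfolding sqrt_series_def
    by (simp add: bounded_linear.suminf[OF bl(1) summable_sqrt_series[OF X]]
        bounded_linear.suminf[OF bl(2) summable_sqrt_series[OF X]]
        matrix_scalar_ac scalar_matrix_assoc[symmetric] matpow_commute[OF comm])
qed

text \<open>The constant term $1$ dominates the remaining coefficients, whose absolute values
  sum to at most $1$.\<close>
lemma sqrt_series_quadratic_nonneg:
  assumes X: "contraction_matrix X"
  shows "0 \<le> x \<bullet> (sqrt_series X *v x)"
proof -
  let ?c = sqrt_one_minus_coeff
  define t where "t k = ?c k * (x \<bullet> (matpow X k *v x))" for k
  have "bounded_linear (\<lambda>B. x \<bullet> (B *v x))"
    by (rule bounded_linear_compose[OF bounded_linear_inner_right
          bounded_bilinear.bounded_linear_left[OF bounded_bilinear_matrix_vector_mult]])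
  then have "x \<bullet> (sqrt_series X *v x)
      = (\<Sum>k. x \<bullet> ((sqrt_one_minus_coeff k *\<^sub>R matpow X k) *v x))"
    unfolding sqrt_series_def by (rule bounded_linear.suminf[OF _ summable_sqrt_series[OF X]])
  then have series: "x \<bullet> (sqrt_series X *v x) = (\<Sum>k. t k)"
    by (simp add: t_def matrix_scaleR_vector_mult)
  have t_bound: "\<bar>t k\<bar> \<le> \<bar>?c k\<bar> * (norm x)\<^sup>2" for k
  proof -
    have "\<bar>x \<bullet> (matpow X k *v x)\<bar> \<le> norm x * norm (matpow X k *v x)"
      by (rule Cauchy_Schwarz_ineq2)
    also have "\<dots> \<le> (norm x)\<^sup>2"
      by (simp add: power2_eq_square mult_left_mono norm_matpow_vector_le[OF X])
    finally show ?thesis by (simp add: t_def abs_mult mult_left_mono)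
  qed
  have summable_tail: "summable (\<lambda>k. \<bar>?c (Suc k)\<bar> * (norm x)\<^sup>2)"
    by (rule summable_mult2[OF summable_abs_sqrt_one_minus_coeff_Suc])
  have summable_t: "summable (\<lambda>k. t (Suc k))"
    by (rule summable_comparison_test[OF _ summable_tail]) (auto intro: t_bound)
  have "(\<Sum>k. t k) = t 0 + (\<Sum>k. t (Suc k))"
    using suminf_split_head[OF summable_t[unfolded summable_Suc_iff]] by simp
  moreover have "t 0 = (norm x)\<^sup>2"
    by (simp add: t_def power2_norm_eq_inner)
  moreover have "(\<Sum>k. - t (Suc k)) \<le> (\<Sum>k. \<bar>?c (Suc k)\<bar> * (norm x)\<^sup>2)"
    by (rule suminf_le[OF _ summable_minus[OF summable_t] summable_tail])
      (use t_bound in \<open>auto simp: abs_le_iff\<close>)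
  moreover have "(\<Sum>k. \<bar>?c (Suc k)\<bar> * (norm x)\<^sup>2) \<le> (norm x)\<^sup>2"
    using suminf_abs_sqrt_one_minus_coeff_Suc_le
    by (simp add: suminf_mult2[OF summable_abs_sqrt_one_minus_coeff_Suc, symmetric]
        mult_left_le_one_le suminf_nonneg summable_abs_sqrt_one_minus_coeff_Suc)
  ultimately show ?thesis
    using series by (simp add: suminf_minus[OF summable_t])
qed

lemma continuous_on_sqrt_series:
  "continuous_on {X::real^'n^'n. contraction_matrix X} sqrt_series"
proof -
  have limit: "uniform_limit {X::real^'n^'n. contraction_matrix X}
      (\<lambda>N X. \<Sum>k<N. sqrt_one_minus_coeff k *\<^sub>R matpow X k) sqrt_series sequentially"
    unfolding sqrt_series_def[abs_def]
  proof (rule Weierstrass_m_test)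
    show "norm (sqrt_one_minus_coeff k *\<^sub>R matpow X k)
        \<le> \<bar>sqrt_one_minus_coeff k\<bar> * sqrt (real CARD('n))"
      if "X \<in> {X. contraction_matrix X}" for k and X :: "real^'n^'n"
      using that by (simp add: mult_left_mono norm_matpow_le)
    show "summable (\<lambda>k. \<bar>sqrt_one_minus_coeff k\<bar> * sqrt (real CARD('n)))"
      by (rule summable_mult2[OF summable_abs_sqrt_one_minus_coeff])
  qed
  have "continuous_on S (\<lambda>X. \<Sum>k<N. sqrt_one_minus_coeff k *\<^sub>R matpow X k)"
    for S :: "(real^'n^'n) set" and N
    by (intro continuous_on_sum continuous_on_scaleR continuous_on_const continuous_on_matpow)
  then show ?thesis
    by (intro uniform_limit_theorem[OF _ limit] always_eventually allI) simp_all
qed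

section \<open>The positive semidefinite square root\<close>

lemma symmetric_matrix_eq_0_if_quadratic_form_0:
  fixes P :: "real^'n^'n"
  assumes sym: "transpose P = P" and zero: "\<And>x. x \<bullet> (P *v x) = 0"
  shows "P = 0"
proof -
  have "y \<bullet> (P *v x) = 0" for x y
  proof -
    have "(x + y) \<bullet> (P *v (x + y)) = x \<bullet> (P *v x) + 2 * (y \<bullet> (P *v x)) + y \<bullet> (P *v y)"
      using symmetric_matrix_inner_commute[OF sym, of x y]
      by (simp add: matrix_vector_right_distrib inner_add_left inner_add_right inner_commute)
    then show ?thesis
      using zero[of "x + y"] zero[of x] zero[of y] by simp
  qed
  then have "P *v x = 0 *v x" for x
    using inner_eq_zero_iff[of "P *v x"] by simp
  then show ?thesis
    by (rule matrix_eq[THEN iffD2, rule_format])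
qed

lemma symmetric_matrix_mult_self_quadratic_form:
  "transpose B = B \<Longrightarrow> x \<bullet> ((B ** B) *v x) = (B *v x) \<bullet> ((B::real^'n^'n) *v x)"
  by (simp add: symmetric_matrix_inner_commute matrix_vector_mul_assoc[symmetric])

lemma symmetric_matrix_eq_0_if_cube_0:
  fixes D :: "real^'n^'n"
  assumes sym: "transpose D = D" and cube: "D ** D ** D = 0"
  shows "D = 0"
proof -
  have sym2: "transpose (D ** D) = D ** D"
    by (simp add: matrix_transpose_mul sym)
  have "(D ** D) ** (D ** D) = 0"
    using cube by (simp add: matrix_mul_assoc)
  then have "(D ** D) *v x = 0" for x
    using symmetric_matrix_mult_self_quadratic_form[OF sym2, of x] by simp
  then have "D ** D = 0"
    using matrix_eq[of "D ** D" 0] by simp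
  then have "D *v x = 0" for x
    using symmetric_matrix_mult_self_quadratic_form[OF sym, of x] by simp
  then show ?thesis
    using matrix_eq[of D 0] by simp
qed

text \<open>With $D = S - T$: $(S + T) D = 0$, hence $D S D + D T D = 0$ with both terms positive
  semidefinite, so both vanish and $D^3 = D S D - D T D = 0$.\<close>
lemma psd_eq_if_commute_square_eq:
  fixes S T :: "real^'n^'n"
  assumes S: "psd S" and T: "psd T" and comm: "S ** T = T ** S" and sq: "S ** S = T ** T"
  shows "S = T"
proof -
  define D where "D = S - T"
  have symS: "transpose S = S" and symT: "transpose T = T"
    using S T by (auto simp: psd_def)
  have symD: "transpose D = D"
    by (simp add: D_def transpose_diff symS symT)
  have sandwich_sym: "transpose (D ** M ** D) = D ** M ** D" if "transpose M = M" for M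
    using that symD by (simp add: matrix_transpose_mul matrix_mul_assoc)
  have sandwich_quad: "x \<bullet> ((D ** M ** D) *v x) = (D *v x) \<bullet> (M *v (D *v x))" for M x
    using symD by (simp add: matrix_vector_mul_assoc[symmetric] symmetric_matrix_inner_commute)
  have "(S + T) ** D = 0"
    unfolding D_def matrix_mult_diff_right matrix_mult_add_left using comm sq by simp
  then have "D ** S ** D + D ** T ** D = 0"
    by (simp add: matrix_mul_assoc[symmetric] matrix_add_ldistrib[symmetric]
        matrix_mult_add_left[symmetric])
  then have "x \<bullet> ((D ** S ** D) *v x) + x \<bullet> ((D ** T ** D) *v x) = 0" for x
    by (metis inner_add_right inner_zero_right matrix_vector_mult_add_rdistrib
        matrix_vector_mult_0)
  moreover have "0 \<le> x \<bullet> ((D ** S ** D) *v x)" "0 \<le> x \<bullet> ((D ** T ** D) *v x)" for x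
    using S T by (simp_all add: sandwich_quad psd_def)
  ultimately have "D ** S ** D = 0" "D ** T ** D = 0"
    by (intro symmetric_matrix_eq_0_if_quadratic_form_0 sandwich_sym symS symT;
        meson add_nonneg_eq_0_iff)+
  moreover have "D ** D ** D = D ** S ** D - D ** T ** D"
    by (simp add: D_def matrix_mult_diff_left matrix_mult_diff_right)
  ultimately have "D = 0"
    using symmetric_matrix_eq_0_if_cube_0[OF symD] by simp
  then show ?thesis
    by (simp add: D_def)
qed

lemma contraction_matrix_if_quadratic_form_bounds:
  fixes Y :: "real^'n^'n"
  assumes sym: "transpose Y = Y"
    and lower: "\<And>x. 0 \<le> x \<bullet> (Y *v x)" and upper: "\<And>x. x \<bullet> (Y *v x) \<le> (norm x)\<^sup>2"
  shows "contraction_matrix Y"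
  unfolding contraction_matrix_def
proof
  fix x :: "real^'n"
  show "norm (Y *v x) \<le> norm x"
  proof (cases "Y *v x = 0")
    case False
    then have "x \<noteq> 0" by auto
    define y where "y = (norm x / norm (Y *v x)) *\<^sub>R (Y *v x)"
    have "norm y = norm x"
      using False by (simp add: y_def)
    have cross: "x \<bullet> (Y *v y) = y \<bullet> (Y *v x)"
      using symmetric_matrix_inner_commute[OF sym, of x y] by (simp add: inner_commute)
    \<comment> \<open>Polarization: since $Y$ is positive semidefinite and $\|y\| = \|x\|$,
      $4\, y \cdot Yx \le (x + y) \cdot Y(x + y) \le \|x + y\|^2 \le 4 \|x\|^2$.\<close>
    have "(x + y) \<bullet> (Y *v (x + y)) - (x - y) \<bullet> (Y *v (x - y)) = 4 * (y \<bullet> (Y *v x))"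
      using cross
      by (simp add: matrix_vector_right_distrib matrix_vector_mult_diff_distrib inner_add_left
          inner_add_right inner_diff_left inner_diff_right)
    moreover have "(x + y) \<bullet> (Y *v (x + y)) \<le> (norm x + norm y)\<^sup>2"
      using upper[of "x + y"] norm_triangle_ineq[of x y]
      by (meson norm_ge_zero order_trans power_mono)
    ultimately have "y \<bullet> (Y *v x) \<le> (norm x)\<^sup>2"
      using lower[of "x - y"] \<open>norm y = norm x\<close> by (simp add: power2_eq_square)
    moreover have "y \<bullet> (Y *v x) = norm x * norm (Y *v x)"
      using False by (simp add: y_def power2_norm_eq_inner[symmetric] power2_eq_square)
    ultimately show ?thesis
      using \<open>x \<noteq> 0\<close> by (simp add: power2_eq_square)
  qed simp
qed

lemma contraction_matrix_id_minus_scaled: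
  fixes Q :: "real^'n^'n"
  assumes Q: "psd Q" and c: "0 < c" "op_norm Q \<le> c"
  shows "contraction_matrix (mat 1 - (1/c) *\<^sub>R Q)"
    and "transpose (mat 1 - (1/c) *\<^sub>R Q) = mat 1 - (1/c) *\<^sub>R Q"
proof -
  have symQ: "transpose Q = Q"
    using Q by (simp add: psd_def)
  show sym: "transpose (mat 1 - (1/c) *\<^sub>R Q) = mat 1 - (1/c) *\<^sub>R Q"
    by (simp add: transpose_diff transpose_scalar symQ)
  have quad: "x \<bullet> ((mat 1 - (1/c) *\<^sub>R Q) *v x) = (norm x)\<^sup>2 - (x \<bullet> (Q *v x)) / c" for x
    by (simp add: matrix_vector_mult_diff_rdistrib matrix_scaleR_vector_mult inner_diff_right
        power2_norm_eq_inner)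
  have "x \<bullet> (Q *v x) \<le> c * (norm x)\<^sup>2" for x
  proof -
    have "x \<bullet> (Q *v x) \<le> norm x * (op_norm Q * norm x)"
      by (intro order_trans[OF norm_cauchy_schwarz] mult_left_mono
          norm_matrix_vector_mult_le_op_norm norm_ge_zero)
    also have "\<dots> = op_norm Q * (norm x)\<^sup>2"
      by (simp add: power2_eq_square)
    also have "\<dots> \<le> c * (norm x)\<^sup>2"
      using c by (intro mult_right_mono) auto
    finally show ?thesis .
  qed
  moreover have "0 \<le> x \<bullet> (Q *v x)" for x
    using Q by (simp add: psd_def)
  ultimately show "contraction_matrix (mat 1 - (1/c) *\<^sub>R Q)"
    using c by (intro contraction_matrix_if_quadratic_form_bounds[OF sym])
      (simp_all add: quad field_simps)
qed

lemma psd_sqrt_series_scaled: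
  fixes Q :: "real^'n^'n"
  assumes Q: "psd Q" and c: "0 < c" "op_norm Q \<le> c"
  defines "S \<equiv> sqrt c *\<^sub>R sqrt_series (mat 1 - (1/c) *\<^sub>R Q)"
  shows "psd S" and "S ** S = Q"
proof -
  note Y = contraction_matrix_id_minus_scaled[OF Q c]
  have "S ** S = (sqrt c * sqrt c) *\<^sub>R (mat 1 - (mat 1 - (1/c) *\<^sub>R Q))"
    by (simp add: S_def matrix_scalar_ac scalar_matrix_assoc[symmetric] sqrt_series_square[OF Y(1)])
  then show "S ** S = Q"
    using c by simp
  show "psd S"
    unfolding psd_def S_def
    using transpose_sqrt_series[OF Y] sqrt_series_quadratic_nonneg[OF Y(1)] c
    by (simp add: transpose_scalar matrix_scaleR_vector_mult)
qed

lemma psd_sqrt_eq_sqrt_series: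
  fixes Q :: "real^'n^'n"
  assumes Q: "psd Q" and c: "0 < c" "op_norm Q \<le> c"
  shows "psd_sqrt Q = sqrt c *\<^sub>R sqrt_series (mat 1 - (1/c) *\<^sub>R Q)"
  unfolding psd_sqrt_def
proof (rule the_equality)
  let ?Y = "mat 1 - (1/c) *\<^sub>R Q"
  let ?S = "sqrt c *\<^sub>R sqrt_series ?Y"
  show "psd ?S \<and> ?S ** ?S = Q"
    using psd_sqrt_series_scaled[OF Q c] by blast
  fix S
  assume S: "psd S \<and> S ** S = Q"
  then have "S ** Q = Q ** S"
    by (metis matrix_mul_assoc[of S S S])
  then have "S ** ?Y = ?Y ** S"
    unfolding matrix_mult_diff_left matrix_mult_diff_right
    by (simp add: matrix_scalar_ac scalar_matrix_assoc[symmetric])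
  then have "S ** sqrt_series ?Y = sqrt_series ?Y ** S"
    by (rule sqrt_series_commute[OF contraction_matrix_id_minus_scaled(1)[OF Q c]])
  then have "S ** ?S = ?S ** S"
    by (simp add: matrix_scalar_ac scalar_matrix_assoc[symmetric])
  moreover have "psd S" "S ** S = Q"
    using S by simp_all
  ultimately show "S = ?S"
    using psd_sqrt_series_scaled[OF Q c] by (simp add: psd_eq_if_commute_square_eq)
qed

lemma psd_sqrt:
  fixes Q :: "real^'n^'n"
  assumes "psd Q"
  shows "psd (psd_sqrt Q)" and "psd_sqrt Q ** psd_sqrt Q = Q"
proof -
  have c: "0 < op_norm Q + 1" "op_norm Q \<le> op_norm Q + 1"
    using op_norm_nonneg[of Q] by simp_all
  show "psd (psd_sqrt Q)" "psd_sqrt Q ** psd_sqrt Q = Q"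
    using psd_sqrt_series_scaled[OF assms c] by (simp_all add: psd_sqrt_eq_sqrt_series[OF assms c])
qed

lemma norm_psd_sqrt_mult_sq_le:
  fixes Q :: "real^'n^'n"
  assumes Q: "psd Q"
  shows "(norm (psd_sqrt Q *v z))\<^sup>2 \<le> op_norm Q * (norm z)\<^sup>2"
proof -
  have "(norm (psd_sqrt Q *v z))\<^sup>2 = z \<bullet> (Q *v z)"
    using symmetric_matrix_mult_self_quadratic_form[of "psd_sqrt Q" z] psd_sqrt[OF Q]
    by (simp add: psd_def power2_norm_eq_inner)
  also have "\<dots> \<le> norm z * (op_norm Q * norm z)"
    by (intro order_trans[OF norm_cauchy_schwarz] mult_left_mono
        norm_matrix_vector_mult_le_op_norm norm_ge_zero)
  finally show ?thesis
    by (simp add: power2_eq_square mult_ac)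
qed

lemma tendsto_psd_sqrt:
  fixes Q :: "real^'n^'n"
  assumes Q: "psd Q" and Qs: "\<And>k. psd (Qs k)" and lim: "Qs \<longlonglongrightarrow> Q"
  shows "(\<lambda>k. psd_sqrt (Qs k)) \<longlonglongrightarrow> psd_sqrt Q"
proof -
  define c where "c = op_norm Q + 1"
  have c: "0 < c" "op_norm Q \<le> c"
    using op_norm_nonneg[of Q] by (simp_all add: c_def)
  have "(\<lambda>k. norm (Qs k - Q)) \<longlonglongrightarrow> 0"
    using lim by (simp add: tendsto_norm_zero_iff LIM_zero)
  then have "\<forall>\<^sub>F k in sequentially. norm (Qs k - Q) < 1"
    by (rule order_tendstoD) simp
  then have near: "\<forall>\<^sub>F k in sequentially. op_norm (Qs k) \<le> c"
  proof eventually_elim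
    case (elim k)
    then show ?case
      using op_norm_le_add_norm_diff[of "Qs k" Q] by (simp add: c_def)
  qed
  have "(\<lambda>k. sqrt_series (mat 1 - (1/c) *\<^sub>R Qs k)) \<longlonglongrightarrow> sqrt_series (mat 1 - (1/c) *\<^sub>R Q)"
  proof (rule continuous_on_tendsto_compose[OF continuous_on_sqrt_series])
    show "(\<lambda>k. mat 1 - (1/c) *\<^sub>R Qs k) \<longlonglongrightarrow> mat 1 - (1/c) *\<^sub>R Q"
      by (intro tendsto_intros lim)
    show "mat 1 - (1/c) *\<^sub>R Q \<in> {X. contraction_matrix X}"
      using contraction_matrix_id_minus_scaled[OF Q c] by simp
    show "\<forall>\<^sub>F k in sequentially. mat 1 - (1/c) *\<^sub>R Qs k \<in> {X. contraction_matrix X}"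
      using near by eventually_elim (use contraction_matrix_id_minus_scaled[OF Qs c(1)] in simp)
  qed
  then have "(\<lambda>k. sqrt c *\<^sub>R sqrt_series (mat 1 - (1/c) *\<^sub>R Qs k)) \<longlonglongrightarrow> psd_sqrt Q"
    using psd_sqrt_eq_sqrt_series[OF Q c] by (simp add: tendsto_scaleR)
  moreover have "\<forall>\<^sub>F k in sequentially.
      sqrt c *\<^sub>R sqrt_series (mat 1 - (1/c) *\<^sub>R Qs k) = psd_sqrt (Qs k)"
    using near by eventually_elim (simp add: psd_sqrt_eq_sqrt_series[OF Qs c(1)])
  ultimately show ?thesis
    by (rule Lim_transform_eventually)
qed

section \<open>Gaussian integrals\<close>

lemma nn_integral_exp_neg_sq_finite:
  assumes "0 < (\<beta>::real)"
  shows "(\<integral>\<^sup>+ t. ennreal (exp (- \<beta> * t\<^sup>2)) \<partial>lborel) < \<infinity>"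
proof -
  define \<sigma> where "\<sigma> = 1 / sqrt (2 * \<beta>)"
  define K where "K = sqrt (2 * pi * \<sigma>\<^sup>2)"
  have \<sigma>: "0 < \<sigma>" "2 * \<sigma>\<^sup>2 = 1 / \<beta>"
    using assms by (simp_all add: \<sigma>_def power_divide)
  have K: "0 < K"
    using \<sigma> by (simp add: K_def)
  have "exp (- \<beta> * t\<^sup>2) = K * normal_density 0 \<sigma> t" for t
    using K \<sigma>(2) by (simp add: normal_density_def K_def[symmetric])
  then have "(\<integral>\<^sup>+ t. ennreal (exp (- \<beta> * t\<^sup>2)) \<partial>lborel)
      = K * (\<integral>\<^sup>+ t. ennreal (normal_density 0 \<sigma> t) \<partial>lborel)"
    using K by (simp add: ennreal_mult nn_integral_cmult)
  also have "\<dots> < \<infinity>"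
    using integrable_normal_density[OF \<sigma>(1), of 0]
    by (simp add: integrable_iff_bounded ennreal_mult_less_top)
  finally show ?thesis .
qed

lemma nn_integral_exp_neg_norm_sq_finite:
  assumes "0 < (\<beta>::real)"
  shows "(\<integral>\<^sup>+ z. ennreal (exp (- \<beta> * (norm (z::'a::euclidean_space))\<^sup>2)) \<partial>lborel) < \<infinity>"
proof -
  have coordinates: "ennreal (exp (- \<beta> * (norm z)\<^sup>2)) = (\<Prod>b\<in>Basis. ennreal (exp (- \<beta> * (z \<bullet> b)\<^sup>2)))"
    for z :: 'a
  proof -
    have "(norm z)\<^sup>2 = (\<Sum>b\<in>Basis. (z \<bullet> b)\<^sup>2)"
      using euclidean_inner[of z z] power2_norm_eq_inner[of z] by (simp add: power2_eq_square)
    then show ?thesis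
      by (simp add: sum_distrib_left exp_sum prod_ennreal)
  qed
  have "(\<integral>\<^sup>+ z. ennreal (exp (- \<beta> * (norm (z::'a))\<^sup>2)) \<partial>lborel)
      = (\<Prod>b\<in>(Basis::'a set). \<integral>\<^sup>+ t. ennreal (exp (- \<beta> * t\<^sup>2)) \<partial>lborel)"
    unfolding coordinates by (rule nn_integral_lborel_prod) auto
  also have "\<dots> < \<infinity>"
    using nn_integral_exp_neg_sq_finite[OF assms] by (simp add: power_less_top_ennreal)
  finally show ?thesis .
qed

definition std_gauss_density :: "real^'n \<Rightarrow> real" where
  "std_gauss_density z = (2 * pi) powr (- real CARD('n) / 2) * exp (- (norm z)\<^sup>2 / 2)"

lemma std_gauss_density_pos: "0 < std_gauss_density z"
  by (simp add: std_gauss_density_def)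

lemma sets_std_gauss [measurable_cong, simp]: "sets std_gauss = sets borel"
  by (simp add: std_gauss_def)

lemma space_std_gauss [simp]: "space std_gauss = UNIV"
  by (simp add: std_gauss_def)

lemma borel_measurable_std_gauss: "borel_measurable std_gauss = borel_measurable borel"
  by (rule measurable_cong_sets) simp_all

lemma nn_integral_std_gauss:
  assumes "f \<in> borel_measurable borel"
  shows "(\<integral>\<^sup>+ z. f z \<partial>std_gauss) = (\<integral>\<^sup>+ z. ennreal (std_gauss_density z) * f z \<partial>lborel)"
  unfolding std_gauss_def std_gauss_density_def[symmetric]
  using assms by (intro nn_integral_density) (auto simp: std_gauss_density_def)

lemma nn_integral_exp_norm_sq_std_gauss_finite:
  assumes "a < 1/2"
  shows "(\<integral>\<^sup>+ z. ennreal (exp (a * (norm (z::real^'n))\<^sup>2)) \<partial>std_gauss) < \<infinity>"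
proof -
  define C :: real where "C = (2 * pi) powr (- real CARD('n) / 2)"
  have "ennreal (std_gauss_density z) * ennreal (exp (a * (norm z)\<^sup>2))
      = ennreal C * ennreal (exp (- (1/2 - a) * (norm z)\<^sup>2))" for z :: "real^'n"
  proof -
    have "std_gauss_density z * exp (a * (norm z)\<^sup>2) = C * exp (- (1/2 - a) * (norm z)\<^sup>2)"
      by (simp add: std_gauss_density_def C_def mult.assoc exp_add[symmetric] algebra_simps)
    then show ?thesis
      by (simp add: C_def std_gauss_density_pos less_imp_le flip: ennreal_mult)
  qed
  then have "(\<integral>\<^sup>+ z. ennreal (exp (a * (norm (z::real^'n))\<^sup>2)) \<partial>std_gauss)
      = (\<integral>\<^sup>+ z. ennreal C * ennreal (exp (- (1/2 - a) * (norm (z::real^'n))\<^sup>2)) \<partial>lborel)"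
    by (simp add: nn_integral_std_gauss)
  also have "\<dots> = C * (\<integral>\<^sup>+ z. ennreal (exp (- (1/2 - a) * (norm (z::real^'n))\<^sup>2)) \<partial>lborel)"
    by (rule nn_integral_cmult) simp
  also have "\<dots> < \<infinity>"
    using nn_integral_exp_neg_norm_sq_finite[of "1/2 - a", where 'a="real^'n"] assms
    by (simp add: ennreal_mult_less_top)
  finally show ?thesis .
qed

lemma finite_measure_std_gauss: "finite_measure (std_gauss :: (real^'n) measure)"
proof
  have "emeasure (std_gauss :: (real^'n) measure) (space std_gauss)
      = (\<integral>\<^sup>+ z. ennreal (exp (0 * (norm (z::real^'n))\<^sup>2)) \<partial>std_gauss)"
    by (simp add: nn_integral_const)
  also have "\<dots> < \<infinity>"
    by (rule nn_integral_exp_norm_sq_std_gauss_finite) simp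
  finally show "emeasure (std_gauss :: (real^'n) measure) (space std_gauss) \<noteq> \<infinity>"
    by simp
qed

lemma nn_integral_std_gauss_pos:
  assumes "f \<in> borel_measurable borel" and pos: "\<And>z. 0 < f z"
  shows "0 < (\<integral>\<^sup>+ z. ennreal (f z) \<partial>(std_gauss :: (real^'n) measure))"
proof (rule ccontr)
  assume "\<not> ?thesis"
  then have "(\<integral>\<^sup>+ z. ennreal (std_gauss_density z) * ennreal (f z) \<partial>lborel) = 0"
    using assms by (simp add: nn_integral_std_gauss)
  then have "AE z in lborel. ennreal (std_gauss_density z) * ennreal (f (z::real^'n)) = 0"
    using assms by (subst (asm) nn_integral_0_iff_AE) (auto simp: std_gauss_density_def)
  moreover have "ennreal (std_gauss_density z) * ennreal (f z) \<noteq> 0" for z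
    using mult_pos_pos[OF std_gauss_density_pos pos, of z z]
    by (auto simp add: ennreal_mult[symmetric, OF less_imp_le[OF std_gauss_density_pos]
          less_imp_le[OF pos]])
  ultimately have "AE z::real^'n in lborel. False"
    by (simp add: eventually_mono)
  then have "emeasure lborel (UNIV :: (real^'n) set) = 0"
    using AE_iff_measurable[of "UNIV :: (real^'n) set" lborel "\<lambda>_. False"] by simp
  then show False
    by simp
qed

section \<open>The moment generating function\<close>

lemma nn_integral_dominated_convergence_eventually:
  fixes u :: "nat \<Rightarrow> 'a \<Rightarrow> ennreal"
  assumes "\<And>n. u n \<in> borel_measurable M" "f \<in> borel_measurable M" "w \<in> borel_measurable M"
    and bound: "\<forall>\<^sub>F n in sequentially. AE x in M. u n x \<le> w x"
    and "(\<integral>\<^sup>+x. w x \<partial>M) < \<infinity>"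
    and lim: "AE x in M. (\<lambda>n. u n x) \<longlonglongrightarrow> f x"
  shows "(\<lambda>n. \<integral>\<^sup>+x. u n x \<partial>M) \<longlonglongrightarrow> (\<integral>\<^sup>+x. f x \<partial>M)"
proof -
  obtain N where N: "\<And>n. N \<le> n \<Longrightarrow> AE x in M. u n x \<le> w x"
    using bound by (auto simp: eventually_sequentially)
  have "(\<lambda>n. \<integral>\<^sup>+x. u (n + N) x \<partial>M) \<longlonglongrightarrow> (\<integral>\<^sup>+x. f x \<partial>M)"
  proof (rule nn_integral_dominated_convergence[where w=w])
    show "AE x in M. u (n + N) x \<le> w x" for n
      using N[of "n + N"] by simp
    show "AE x in M. (\<lambda>n. u (n + N) x) \<longlonglongrightarrow> f x"
      using lim by eventually_elim (rule LIMSEQ_ignore_initial_segment)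
  qed (use assms in auto)
  then show ?thesis
    by (rule LIMSEQ_offset)
qed

lemma mgfM_eq_inner:
  "mgfM G Q0 Q1 = (\<integral>\<^sup>+ z. ennreal (exp (Q0 \<bullet> G (psd_sqrt Q1 *v z))) \<partial>std_gauss)"
  by (simp add: mgfM_def trace_transpose_mult)

lemma continuous_on_inner_matrix_comp:
  fixes S :: "real^'n^'n"
  assumes "continuous_on UNIV (G :: real^'n \<Rightarrow> real^'m^'m)"
  shows "continuous_on UNIV (\<lambda>z. Q0 \<bullet> G (S *v z))"
proof -
  have "continuous_on UNIV (\<lambda>z::real^'n. S *v z)"
    by (intro linear_continuous_on matrix_vector_mul_bounded_linear)
  then show ?thesis
    by (intro continuous_intros continuous_on_compose2[OF assms]) auto
qed

lemma borel_measurable_mgf_integrand: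
  fixes S :: "real^'n^'n"
  assumes "continuous_on UNIV (G :: real^'n \<Rightarrow> real^'m^'m)"
  shows "(\<lambda>z. exp (Q0 \<bullet> G (S *v z))) \<in> borel_measurable std_gauss"
    and "(\<lambda>z. ennreal (exp (Q0 \<bullet> G (S *v z)))) \<in> borel_measurable std_gauss"
proof -
  show "(\<lambda>z. exp (Q0 \<bullet> G (S *v z))) \<in> borel_measurable std_gauss"
    unfolding borel_measurable_std_gauss
    by (intro borel_measurable_continuous_onI continuous_intros
        continuous_on_inner_matrix_comp[OF assms])
  then show "(\<lambda>z. ennreal (exp (Q0 \<bullet> G (S *v z)))) \<in> borel_measurable std_gauss"
    by measurable
qed

lemma mgfM_pos:
  assumes "continuous_on UNIV G"
  shows "0 < mgfM G Q0 Q1"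
  unfolding mgfM_eq_inner
  using borel_measurable_mgf_integrand(1)[OF assms]
  by (intro nn_integral_std_gauss_pos) (simp_all add: borel_measurable_std_gauss)

lemma mgfM_convex:
  assumes cG: "continuous_on UNIV G" and t: "0 \<le> t" "t \<le> 1"
  shows "mgfM G ((1 - t) *\<^sub>R A + t *\<^sub>R B) Q1
           \<le> ennreal (1 - t) * mgfM G A Q1 + ennreal t * mgfM G B Q1"
proof -
  let ?S = "psd_sqrt Q1"
  have "ennreal (exp (((1 - t) *\<^sub>R A + t *\<^sub>R B) \<bullet> G (?S *v z)))
      \<le> ennreal (1 - t) * ennreal (exp (A \<bullet> G (?S *v z)))
        + ennreal t * ennreal (exp (B \<bullet> G (?S *v z)))" for z
  proof -
    have "exp (((1 - t) *\<^sub>R A + t *\<^sub>R B) \<bullet> G (?S *v z))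
        \<le> (1 - t) * exp (A \<bullet> G (?S *v z)) + t * exp (B \<bullet> G (?S *v z))"
      using convex_onD[OF exp_convex, of t "A \<bullet> G (?S *v z)" "B \<bullet> G (?S *v z)"] t
      by (simp add: inner_add_left)
    then show ?thesis
      using t by (simp add: ennreal_plus[symmetric] ennreal_mult[symmetric] del: ennreal_plus)
  qed
  then have "mgfM G ((1 - t) *\<^sub>R A + t *\<^sub>R B) Q1
      \<le> (\<integral>\<^sup>+ z. ennreal (1 - t) * ennreal (exp (A \<bullet> G (?S *v z)))
               + ennreal t * ennreal (exp (B \<bullet> G (?S *v z))) \<partial>std_gauss)"
    unfolding mgfM_eq_inner by (rule nn_integral_mono)
  also have "\<dots> = ennreal (1 - t) * mgfM G A Q1 + ennreal t * mgfM G B Q1"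
    using borel_measurable_mgf_integrand(2)[OF cG]
    by (simp add: mgfM_eq_inner nn_integral_add nn_integral_cmult)
  finally show ?thesis .
qed

lemma convex_domD:
  assumes "continuous_on UNIV G"
  shows "convex (domD G Q1)"
  unfolding convex_alt
proof (intro ballI allI impI)
  fix A B and t :: real
  assume "A \<in> domD G Q1" "B \<in> domD G Q1" and t: "0 \<le> t \<and> t \<le> 1"
  then have "ennreal (1 - t) * mgfM G A Q1 + ennreal t * mgfM G B Q1 < \<infinity>"
    by (simp add: domD_def ennreal_mult_less_top)
  then show "(1 - t) *\<^sub>R A + t *\<^sub>R B \<in> domD G Q1"
    unfolding domD_def using le_less_trans[OF mgfM_convex[OF assms, of t]] t by simp
qed

lemma mem_domD_if_small:
  fixes G :: "real^'n \<Rightarrow> real^'m^'m" and Q1 :: "real^'n^'n"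
  assumes bound: "\<forall>z. norm (G z) \<le> A * (1 + (norm z)\<^sup>2)"
    and Q1: "psd Q1" and small: "2 * A * op_norm Q1 * norm Q0 < 1"
  shows "Q0 \<in> domD G Q1"
proof -
  let ?S = "psd_sqrt Q1"
  define a where "a = norm Q0 * A * op_norm Q1"
  have "0 \<le> A"
    using order_trans[OF norm_ge_zero bound[rule_format, of 0]] by simp
  have "Q0 \<bullet> G (?S *v z) \<le> norm Q0 * A + a * (norm z)\<^sup>2" for z
  proof -
    have "Q0 \<bullet> G (?S *v z) \<le> norm Q0 * (A * (1 + (norm (?S *v z))\<^sup>2))"
      using bound by (intro order_trans[OF norm_cauchy_schwarz] mult_left_mono) auto
    also have "\<dots> \<le> norm Q0 * (A * (1 + op_norm Q1 * (norm z)\<^sup>2))"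
      using norm_psd_sqrt_mult_sq_le[OF Q1, of z] \<open>0 \<le> A\<close>
      by (intro mult_left_mono) auto
    finally show ?thesis
      by (simp add: a_def algebra_simps)
  qed
  then have "mgfM G Q0 Q1
      \<le> (\<integral>\<^sup>+ z. ennreal (exp (norm Q0 * A)) * ennreal (exp (a * (norm (z::real^'n))\<^sup>2)) \<partial>std_gauss)"
    unfolding mgfM_eq_inner
    by (intro nn_integral_mono) (simp add: ennreal_mult[symmetric] exp_add[symmetric])
  also have "\<dots> = ennreal (exp (norm Q0 * A))
      * (\<integral>\<^sup>+ z. ennreal (exp (a * (norm (z::real^'n))\<^sup>2)) \<partial>std_gauss)"
    by (rule nn_integral_cmult) (simp add: borel_measurable_std_gauss)
  also have "\<dots> < \<infinity>"
    using nn_integral_exp_norm_sq_std_gauss_finite[of a, where 'n='n] small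
    by (simp add: a_def ennreal_mult_less_top mult_ac)
  finally show ?thesis
    by (simp add: domD_def)
qed

lemma zero_in_interior_domD:
  assumes bound: "\<forall>z. norm (G z) \<le> A * (1 + (norm z)\<^sup>2)" and Q1: "psd Q1"
  shows "0 \<in> interior (domD G Q1)"
proof -
  define c where "c = 2 * A * op_norm Q1"
  have "0 \<le> c"
    using order_trans[OF norm_ge_zero bound[rule_format, of 0]] op_norm_nonneg[of Q1]
    by (simp add: c_def)
  have "Q0 \<in> domD G Q1" if "norm Q0 < 1 / (c + 1)" for Q0
  proof (rule mem_domD_if_small[OF bound Q1])
    have "c * norm Q0 \<le> c * (1 / (c + 1))"
      using that \<open>0 \<le> c\<close> by (intro mult_left_mono) auto
    also have "\<dots> < 1"
      using \<open>0 \<le> c\<close> by (simp add: field_simps)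
    finally show "2 * A * op_norm Q1 * norm Q0 < 1"
      by (simp add: c_def)
  qed
  then have "ball 0 (1 / (c + 1)) \<subseteq> domD G Q1"
    by auto
  moreover have "0 < 1 / (c + 1)"
    using \<open>0 \<le> c\<close> by simp
  ultimately show ?thesis
    unfolding mem_interior by blast
qed

lemma exp_mult_le_1_plus_exp:
  fixes t x :: real
  assumes "0 \<le> t" "t \<le> 1"
  shows "exp (t * x) \<le> 1 + exp x"
proof -
  have "exp (t * x) \<le> (1 - t) + t * exp x"
    using convex_onD[OF exp_convex, of t 0 x] assms by simp
  moreover have "t * exp x \<le> exp x"
    using assms by (intro mult_left_le_one_le) auto
  ultimately show ?thesis
    using assms(1) by linarith
qed

lemma tendsto_mgfM_scaleR:
  assumes cG: "continuous_on UNIV G" and Q0: "Q0 \<in> domD G Q1"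
    and t: "\<And>n. 0 \<le> t n" "\<And>n. t n \<le> 1" and lim: "t \<longlonglongrightarrow> 1"
  shows "(\<lambda>n. mgfM G (t n *\<^sub>R Q0) Q1) \<longlonglongrightarrow> mgfM G Q0 Q1"
proof -
  define X where "X z = Q0 \<bullet> G (psd_sqrt Q1 *v z)" for z
  have dominated: "ennreal (exp (t n * X z)) \<le> 1 + ennreal (exp (X z))" for n z
    using ennreal_leI[OF exp_mult_le_1_plus_exp[OF t(1,2)]] by simp
  have "(\<lambda>n. \<integral>\<^sup>+ z. ennreal (exp (t n * X z)) \<partial>std_gauss)
      \<longlonglongrightarrow> (\<integral>\<^sup>+ z. ennreal (exp (X z)) \<partial>std_gauss)"
  proof (rule nn_integral_dominated_convergence_eventually[where w="\<lambda>z. 1 + ennreal (exp (X z))"])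
    show "(\<lambda>z. ennreal (exp (t n * X z))) \<in> borel_measurable std_gauss" for n
      using borel_measurable_mgf_integrand(2)[OF cG, of "t n *\<^sub>R Q0"] by (simp add: X_def)
    show "(\<lambda>z. ennreal (exp (X z))) \<in> borel_measurable std_gauss"
      "(\<lambda>z. 1 + ennreal (exp (X z))) \<in> borel_measurable std_gauss"
      using borel_measurable_mgf_integrand(2)[OF cG] by (simp_all add: X_def)
    show "\<forall>\<^sub>F n in sequentially. AE z in std_gauss. ennreal (exp (t n * X z)) \<le> 1 + ennreal (exp (X z))"
      using dominated by simp
    show "(\<integral>\<^sup>+ z. 1 + ennreal (exp (X z)) \<partial>std_gauss) < \<infinity>"
      using Q0 borel_measurable_mgf_integrand(2)[OF cG]
        finite_measure.emeasure_finite[OF finite_measure_std_gauss, of UNIV]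
      by (simp add: nn_integral_add X_def domD_def mgfM_eq_inner less_top)
    show "AE z in std_gauss. (\<lambda>n. ennreal (exp (t n * X z))) \<longlonglongrightarrow> ennreal (exp (X z))"
      using tendsto_mult[OF lim tendsto_const, of "X _"]
      by (intro AE_I2 tendsto_ennrealI tendsto_exp) simp
  qed
  then show ?thesis
    by (simp add: mgfM_eq_inner X_def)
qed

lemma exists_interior_seq_tendsto_mgfM:
  assumes cG: "continuous_on UNIV G"
    and zero: "0 \<in> interior (domD G Q1)" and Q0: "Q0 \<in> domD G Q1"
  obtains Q0s where "\<And>n. Q0s n \<in> interior (domD G Q1)"
    and "(\<lambda>n. mgfM G (Q0s n) Q1) \<longlonglongrightarrow> mgfM G Q0 Q1"
proof
  define t where "t n = 1 - 1 / (real n + 2)" for n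
  have "(\<lambda>n. 1 / (real n + 2)) \<longlonglongrightarrow> 0"
    using LIMSEQ_ignore_initial_segment[OF lim_inverse_n', of 2] by (simp add: add.commute)
  then have lim: "t \<longlonglongrightarrow> 1"
    unfolding t_def using tendsto_diff[OF tendsto_const[of 1]] by fastforce
  then show "(\<lambda>n. mgfM G (t n *\<^sub>R Q0) Q1) \<longlonglongrightarrow> mgfM G Q0 Q1"
    by (intro tendsto_mgfM_scaleR[OF cG Q0 _ _ lim]) (simp_all add: t_def)
  show "t n *\<^sub>R Q0 \<in> interior (domD G Q1)" for n
    using mem_interior_convex_shrink[OF convex_domD[OF cG] zero Q0, of "1 / (real n + 2)"]
    by (simp add: t_def algebra_simps)
qed

lemma tendsto_ln_enn2real:
  assumes "(f \<longlongrightarrow> x) F" and "0 < x" and "x < \<infinity>"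
  shows "((\<lambda>n. ln (enn2real (f n))) \<longlongrightarrow> ln (enn2real x)) F"
proof (rule tendsto_ln)
  show "((\<lambda>n. enn2real (f n)) \<longlongrightarrow> enn2real x) F"
    using assms by (intro tendsto_enn2real) auto
  show "enn2real x \<noteq> 0"
    using assms by (auto simp: enn2real_eq_0_iff)
qed

lemma exp_add_le_Young:
  fixes a b p q :: real
  assumes "0 < p" "0 < q" "1/p + 1/q = 1"
  shows "exp (a + b) \<le> exp (p * a) / p + exp (q * b) / q"
proof -
  have "0 < 1/p" "0 < 1/q"
    using assms by simp_all
  then have weights: "0 \<le> 1/q" "1/q \<le> 1" "1 - 1/q = 1/p"
    using assms(3) by linarith+
  have "exp ((1 - 1/q) *\<^sub>R (p * a) + (1/q) *\<^sub>R (q * b))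
      \<le> (1 - 1/q) * exp (p * a) + (1/q) * exp (q * b)"
    by (rule convex_onD[OF exp_convex weights(1,2)]) auto
  with assms show ?thesis
    by (simp add: weights(3))
qed

lemma norm_diff_comp_matrix_mult_le:
  fixes G :: "real^'n \<Rightarrow> real^'m^'m" and S T :: "real^'n^'n"
  assumes lip: "\<forall>z z'. norm (G z - G z')
      \<le> C * (1 + norm (z - z') * (norm z + norm z')) + \<epsilon> * ((norm z)\<^sup>2 + (norm z')\<^sup>2)"
    and "0 \<le> C" "0 \<le> \<epsilon>" and T: "norm T \<le> B" and S: "norm S \<le> B" and diff: "norm (T - S) \<le> \<rho>"
  shows "norm (G (T *v z) - G (S *v z)) \<le> C + (2 * C * B * \<rho> + 2 * \<epsilon> * B\<^sup>2) * (norm z)\<^sup>2"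
proof -
  have image_le: "norm (M *v z) \<le> b * norm z" if "norm M \<le> b" for M :: "real^'n^'n" and b
    using norm_matrix_vector_mult_le[of M z] mult_right_mono[OF that norm_ge_zero[of z]] by linarith
  have u: "norm (T *v z) \<le> B * norm z" and v: "norm (S *v z) \<le> B * norm z"
    using image_le T S by auto
  have "0 \<le> \<rho>"
    using order_trans[OF norm_ge_zero diff] .
  have "norm (T *v z - S *v z) \<le> \<rho> * norm z"
    using image_le[OF diff] by (simp add: matrix_vector_mult_diff_rdistrib)
  then have cross: "norm (T *v z - S *v z) * (norm (T *v z) + norm (S *v z))
      \<le> (\<rho> * norm z) * (2 * B * norm z)"
    using u v \<open>0 \<le> \<rho>\<close> by (intro mult_mono) auto
  have squares: "(norm (T *v z))\<^sup>2 + (norm (S *v z))\<^sup>2 \<le> 2 * B\<^sup>2 * (norm z)\<^sup>2"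
    using power_mono[OF u norm_ge_zero, of 2] power_mono[OF v norm_ge_zero, of 2]
    by (simp add: power_mult_distrib)
  have "norm (G (T *v z) - G (S *v z))
      \<le> C * (1 + norm (T *v z - S *v z) * (norm (T *v z) + norm (S *v z)))
        + \<epsilon> * ((norm (T *v z))\<^sup>2 + (norm (S *v z))\<^sup>2)"
    using lip by blast
  also have "\<dots> \<le> C * (1 + (\<rho> * norm z) * (2 * B * norm z)) + \<epsilon> * (2 * B\<^sup>2 * (norm z)\<^sup>2)"
    using cross squares assms(2,3) by (intro add_mono mult_left_mono) auto
  also have "\<dots> = C + (2 * C * B * \<rho> + 2 * \<epsilon> * B\<^sup>2) * (norm z)\<^sup>2"
    by (simp add: algebra_simps power2_eq_square)
  finally show ?thesis .
qed

lemma asym_quad_lipschitz_perturbation: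
  fixes G :: "real^'n \<Rightarrow> real^'m^'m" and S :: "real^'n^'n"
  assumes lip: "asym_quad_lipschitz G" and \<delta>: "0 < \<delta>"
  obtains K \<rho> where "0 < \<rho>"
    and "\<And>T z. norm (T - S) < \<rho> \<Longrightarrow> Q0 \<bullet> G (T *v z) \<le> Q0 \<bullet> G (S *v z) + K + \<delta> * (norm z)\<^sup>2"
proof -
  define N where "N = norm Q0 + 1"
  define B where "B = norm S + 1"
  have N: "0 < N" "norm Q0 \<le> N" and B: "0 < B" "norm S \<le> B"
    unfolding N_def B_def using norm_ge_zero[of Q0] norm_ge_zero[of S] by linarith+
  define \<epsilon> where "\<epsilon> = \<delta> / (4 * B\<^sup>2 * N)"
  have \<epsilon>: "0 < \<epsilon>"
    using \<delta> B N by (simp add: \<epsilon>_def)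
  obtain C where C: "0 < C" and lipC: "\<forall>z z'. norm (G z - G z')
      \<le> C * (1 + norm (z - z') * (norm z + norm z')) + \<epsilon> * ((norm z)\<^sup>2 + (norm z')\<^sup>2)"
    using lip \<epsilon> unfolding asym_quad_lipschitz_def by blast
  define \<rho> where "\<rho> = min 1 (\<delta> / (4 * B * C * N))"
  have \<rho>: "0 < \<rho>" "\<rho> \<le> 1" "\<rho> \<le> \<delta> / (4 * B * C * N)"
    using \<delta> B C N by (simp_all add: \<rho>_def)
  have small: "norm Q0 * (2 * C * B * \<rho> + 2 * \<epsilon> * B\<^sup>2) \<le> \<delta>"
  proof -
    have "norm Q0 * (2 * C * B * \<rho> + 2 * \<epsilon> * B\<^sup>2)
        \<le> N * (2 * C * B * (\<delta> / (4 * B * C * N)) + 2 * \<epsilon> * B\<^sup>2)"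
      using N B C \<epsilon> \<rho> by (intro mult_mono add_right_mono mult_left_mono) auto
    also have "\<dots> = \<delta>"
      using N B C by (simp add: \<epsilon>_def field_simps)
    finally show ?thesis .
  qed
  show ?thesis
  proof
    show "0 < \<rho>" by fact
    fix T z
    assume "norm (T - S) < \<rho>"
    then have "norm T \<le> B"
      using norm_triangle_sub[of T S] \<rho>(2) by (simp add: B_def)
    then have "norm (G (T *v z) - G (S *v z)) \<le> C + (2 * C * B * \<rho> + 2 * \<epsilon> * B\<^sup>2) * (norm z)\<^sup>2"
      using \<open>norm (T - S) < \<rho>\<close> C \<epsilon> B
      by (intro norm_diff_comp_matrix_mult_le[OF lipC]) auto
    then have "Q0 \<bullet> (G (T *v z) - G (S *v z))
        \<le> norm Q0 * (C + (2 * C * B * \<rho> + 2 * \<epsilon> * B\<^sup>2) * (norm z)\<^sup>2)"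
      by (intro order_trans[OF norm_cauchy_schwarz] mult_left_mono norm_ge_zero)
    also have "\<dots> = norm Q0 * C + norm Q0 * (2 * C * B * \<rho> + 2 * \<epsilon> * B\<^sup>2) * (norm z)\<^sup>2"
      by (simp add: algebra_simps)
    also have "\<dots> \<le> norm Q0 * C + \<delta> * (norm z)\<^sup>2"
      using small by (intro add_left_mono mult_right_mono) auto
    finally show "Q0 \<bullet> G (T *v z) \<le> Q0 \<bullet> G (S *v z) + norm Q0 * C + \<delta> * (norm z)\<^sup>2"
      by (simp add: inner_diff_right)
  qed
qed

lemma scaleR_mem_if_mem_interior:
  fixes x :: "'a::real_normed_vector"
  assumes "x \<in> interior S"
  obtains \<eta> where "0 < \<eta>" "(1 + \<eta>) *\<^sub>R x \<in> S"
proof -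
  obtain e where e: "0 < e" "ball x e \<subseteq> S"
    using assms by (auto simp: mem_interior)
  define \<eta> where "\<eta> = e / (2 * (norm x + 1))"
  have "0 < \<eta>"
    unfolding \<eta>_def using e add_nonneg_pos[OF norm_ge_zero zero_less_one, of x] by simp
  moreover have "dist x ((1 + \<eta>) *\<^sub>R x) < e"
  proof -
    have "dist x ((1 + \<eta>) *\<^sub>R x) = \<eta> * norm x"
      using \<open>0 < \<eta>\<close> by (simp add: dist_norm algebra_simps)
    also have "\<dots> < \<eta> * (2 * (norm x + 1))"
      using \<open>0 < \<eta>\<close> by (intro mult_strict_left_mono) (auto intro: add_nonneg_pos)
    also have "\<dots> = e"
      unfolding \<eta>_def using add_nonneg_pos[OF norm_ge_zero zero_less_one, of x] by simp
    finally show ?thesis .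
  qed
  ultimately show ?thesis
    using e that by auto
qed

lemma exp_le_Young_split:
  fixes x y K r \<eta> :: real
  assumes \<eta>: "0 < \<eta>" and y: "y \<le> x + K + \<eta> / (4 * (1 + \<eta>)) * r"
  shows "exp y \<le> exp K / (1 + \<eta>) * exp ((1 + \<eta>) * x) + exp K * \<eta> / (1 + \<eta>) * exp (r / 4)"
proof -
  define q where "q = (1 + \<eta>) / \<eta>"
  have q: "0 < q" "1 / (1 + \<eta>) + 1 / q = 1" "q * (\<eta> / (4 * (1 + \<eta>)) * r) = r / 4"
    using \<eta> by (simp_all add: q_def divide_simps)
  have "exp y \<le> exp K * exp (x + \<eta> / (4 * (1 + \<eta>)) * r)"
    using y by (simp add: exp_add[symmetric] add_ac)
  also have "\<dots> \<le> exp K * (exp ((1 + \<eta>) * x) / (1 + \<eta>) + exp (q * (\<eta> / (4 * (1 + \<eta>)) * r)) / q)"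
    using \<eta> q by (intro mult_left_mono exp_add_le_Young) auto
  also have "\<dots> = exp K / (1 + \<eta>) * exp ((1 + \<eta>) * x) + exp K * \<eta> / (1 + \<eta>) * exp (r / 4)"
    using \<eta> by (simp only: q(3)) (simp add: q_def field_simps)
  finally show ?thesis .
qed

lemma tendsto_exp_inner_comp_matrix:
  fixes S :: "real^'n^'n"
  assumes cG: "continuous_on UNIV (G :: real^'n \<Rightarrow> real^'m^'m)" and lim: "Ss \<longlonglongrightarrow> S"
  shows "(\<lambda>k. exp (Q0 \<bullet> G (Ss k *v z))) \<longlonglongrightarrow> exp (Q0 \<bullet> G (S *v z))"
proof -
  have "(\<lambda>k. Ss k *v z) \<longlonglongrightarrow> S *v z"
    by (rule bounded_bilinear.tendsto[OF bounded_bilinear_matrix_vector_mult lim tendsto_const])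
  then have "(\<lambda>k. G (Ss k *v z)) \<longlonglongrightarrow> G (S *v z)"
    by (rule continuous_on_tendsto_compose[OF cG]) auto
  then show ?thesis
    by (intro tendsto_intros)
qed

lemma tendsto_nn_integral_exp_inner_comp:
  fixes G :: "real^'n \<Rightarrow> real^'m^'m" and S :: "real^'n^'n"
  assumes lip: "asym_quad_lipschitz G" and \<eta>: "0 < \<eta>"
    and finite: "(\<integral>\<^sup>+ z. ennreal (exp (((1 + \<eta>) *\<^sub>R Q0) \<bullet> G (S *v z))) \<partial>std_gauss) < \<infinity>"
    and lim: "Ss \<longlonglongrightarrow> S"
  shows "(\<lambda>k. \<integral>\<^sup>+ z. ennreal (exp (Q0 \<bullet> G (Ss k *v z))) \<partial>std_gauss)
           \<longlonglongrightarrow> (\<integral>\<^sup>+ z. ennreal (exp (Q0 \<bullet> G (S *v z))) \<partial>std_gauss)"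
proof -
  have cG: "continuous_on UNIV G"
    using lip by (simp add: asym_quad_lipschitz_def)
  have "0 < \<eta> / (4 * (1 + \<eta>))"
    using \<eta> by simp
  then obtain K \<rho> where "0 < \<rho>" and perturb: "\<And>T z. norm (T - S) < \<rho> \<Longrightarrow>
      Q0 \<bullet> G (T *v z) \<le> Q0 \<bullet> G (S *v z) + K + \<eta> / (4 * (1 + \<eta>)) * (norm z)\<^sup>2"
    by (rule asym_quad_lipschitz_perturbation[OF lip]) blast
  have "(\<lambda>k. norm (Ss k - S)) \<longlonglongrightarrow> 0"
    using lim by (simp add: tendsto_norm_zero_iff LIM_zero)
  then have near: "\<forall>\<^sub>F k in sequentially. norm (Ss k - S) < \<rho>"
    using \<open>0 < \<rho>\<close> by (rule order_tendstoD)
  define w where "w z = ennreal (exp K / (1 + \<eta>)) * ennreal (exp (((1 + \<eta>) *\<^sub>R Q0) \<bullet> G (S *v z)))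
      + ennreal (exp K * \<eta> / (1 + \<eta>)) * ennreal (exp ((norm z)\<^sup>2 / 4))" for z
  have dominated: "ennreal (exp (Q0 \<bullet> G (T *v z))) \<le> w z" if "norm (T - S) < \<rho>" for T z
    using ennreal_leI[OF exp_le_Young_split[OF \<eta> perturb[OF that]]] \<eta>
    by (simp add: w_def ennreal_mult[symmetric] ennreal_plus[symmetric] del: ennreal_plus)
  have measurable: "(\<lambda>z. ennreal (exp ((norm (z::real^'n))\<^sup>2 / 4))) \<in> borel_measurable std_gauss"
    unfolding borel_measurable_std_gauss by measurable
  have "(\<integral>\<^sup>+ z. ennreal (exp ((norm (z::real^'n))\<^sup>2 / 4)) \<partial>std_gauss) < \<infinity>"
    using nn_integral_exp_norm_sq_std_gauss_finite[of "1/4", where 'n='n] by simp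
  then have integrable: "(\<integral>\<^sup>+ z. w z \<partial>std_gauss) < \<infinity>"
    using finite measurable borel_measurable_mgf_integrand(2)[OF cG, of "(1 + \<eta>) *\<^sub>R Q0" S]
    by (simp add: w_def nn_integral_add nn_integral_cmult ennreal_mult_less_top)
  show ?thesis
  proof (rule nn_integral_dominated_convergence_eventually[OF _ _ _ _ integrable])
    show "\<forall>\<^sub>F k in sequentially. AE z in std_gauss. ennreal (exp (Q0 \<bullet> G (Ss k *v z))) \<le> w z"
      using near by eventually_elim (simp add: dominated)
    show "AE z in std_gauss. (\<lambda>k. ennreal (exp (Q0 \<bullet> G (Ss k *v z))))
        \<longlonglongrightarrow> ennreal (exp (Q0 \<bullet> G (S *v z)))"
      by (intro AE_I2 tendsto_ennrealI tendsto_exp_inner_comp_matrix[OF cG lim])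
  qed (use measurable borel_measurable_mgf_integrand(2)[OF cG] in
      \<open>auto simp: w_def simp del: inner_scaleR_left\<close>)
qed

lemma tendsto_mgfM_covariance:
  fixes G :: "real^'n \<Rightarrow> real^'m^'m" and Q1 :: "real^'n^'n"
  assumes lip: "asym_quad_lipschitz G" and Q1: "psd Q1" and Q0: "Q0 \<in> interior (domD G Q1)"
    and Qs: "\<And>k. psd (Qs k)" and lim: "Qs \<longlonglongrightarrow> Q1"
  shows "(\<lambda>k. mgfM G Q0 (Qs k)) \<longlonglongrightarrow> mgfM G Q0 Q1"
proof -
  obtain \<eta> where "0 < \<eta>" and "(1 + \<eta>) *\<^sub>R Q0 \<in> domD G Q1"
    using scaleR_mem_if_mem_interior[OF Q0] by blast
  then show ?thesis
    unfolding mgfM_eq_inner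
    by (intro tendsto_nn_integral_exp_inner_comp[OF lip] tendsto_psd_sqrt[OF Q1 Qs lim])
      (simp_all add: domD_def mgfM_eq_inner)
qed

theorem mainTheorem14:
  fixes G :: "real^'n \<Rightarrow> real^'m^'m" and A :: real and Q1 :: "real^'n^'n"
  assumes G_psd: "\<forall>z. psd (G z)"
    and G_lip: "asym_quad_lipschitz G"
    and A_bound: "\<forall>z. norm (G z) \<le> A * (1 + (norm z)\<^sup>2)"
    and Q1_psd: "psd Q1"
  shows "(\<forall>Q0. 2 * A * op_norm Q1 * norm Q0 < 1 \<longrightarrow> Q0 \<in> domD G Q1)
       \<and> 0 \<in> interior (domD G Q1)
       \<and> (\<forall>Q0 Q1n. Q0 \<in> interior (domD G Q1) \<and> (\<forall>n. psd (Q1n n)) \<and> Q1n \<longlonglongrightarrow> Q1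
            \<longrightarrow> (\<lambda>n. mgfM G Q0 (Q1n n)) \<longlonglongrightarrow> mgfM G Q0 Q1)
       \<and> (\<forall>Q0 \<in> domD G Q1. \<exists>Q0n :: nat \<Rightarrow> real^'m^'m. \<exists>L.
            (\<forall>n. Q0n n \<in> interior (domD G Q1))
            \<and> (\<lambda>n. ln (enn2real (mgfM G (Q0n n) Q1))) \<longlonglongrightarrow> L
            \<and> L \<le> ln (enn2real (mgfM G Q0 Q1)))"
proof -
  have cG: "continuous_on UNIV G"
    using G_lip by (simp add: asym_quad_lipschitz_def)
  have zero: "0 \<in> interior (domD G Q1)"
    by (rule zero_in_interior_domD[OF A_bound Q1_psd])
  have approx: "\<exists>Q0n :: nat \<Rightarrow> real^'m^'m. \<exists>L.
      (\<forall>n. Q0n n \<in> interior (domD G Q1))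
      \<and> (\<lambda>n. ln (enn2real (mgfM G (Q0n n) Q1))) \<longlonglongrightarrow> L
      \<and> L \<le> ln (enn2real (mgfM G Q0 Q1))" if Q0: "Q0 \<in> domD G Q1" for Q0
  proof -
    obtain Q0s where "\<And>n. Q0s n \<in> interior (domD G Q1)"
      and "(\<lambda>n. mgfM G (Q0s n) Q1) \<longlonglongrightarrow> mgfM G Q0 Q1"
      using exists_interior_seq_tendsto_mgfM[OF cG zero Q0] by blast
    moreover have "0 < mgfM G Q0 Q1" "mgfM G Q0 Q1 < \<infinity>"
      using mgfM_pos[OF cG] Q0 by (simp_all add: domD_def)
    ultimately show ?thesis
      using tendsto_ln_enn2real by blast
  qed
  show ?thesis
    using mem_domD_if_small[OF A_bound Q1_psd] zero
      tendsto_mgfM_covariance[OF G_lip Q1_psd] approx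
    by blast
qed

end
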